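(* Let $(a_n)_{n\ge 0}$ be an automatic sequence taking values in a finite alphabet $\mathcal{A}$. Then $(a_n)_{n\ge0}$ is also non-uniformly morphic. Furthermore, if $(a_n)_{n\ge 0}$ is the iterative fixed point of a uniform morphism of $\mathcal{A}^*$, then there exist an alphabet $\mathcal{B}$ of cardinality $2+\#\mathcal{A}$ and a sequence $(a'_n)_{n\ge0}$ with values in $\mathcal{B}$ such that $(a'_n)_{n\ge0}$ is the iterative fixed point of some non-uniform morphism of $\mathcal{B}^*$ and $(a_n)_{n\ge0}$ is the image of $(a'_n)_{n\ge0}$ under a $1$-uniform morphism (i.e. a letter-to-letter map applied pointwise).
   Context: For a finite alphabet $\mathcal{A}$, $\mathcal{A}^*$ is the free monoid of finite words under concatenation; a morphism $\sigma$ from $\mathcal{A}^*$ to $\mathcal{B}^*$ satisfies $\sigma(uv)=\sigma(u)\sigma(v)$ and is extended to infinite sequences letterwise. A morphism is $k$-uniform if every letter is mapped to a word of length exactly $k$; it is non-uniform if it is not $k$-uniform for any $k$. A sequence $(b_n)_{n\ge0}$ over $\mathcal{A}$ is pure morphic (the iterative fixed point of a morphism $\sigma$ of $\mathcal{A}^*$) if $\sigma(b_0)=b_0x$ for some word $x$ with $\sigma^\ell(x)$ nonempty for every $\ell$, and the words $\sigma^\ell(b_0)$ converge to $(b_n)$ (the length of their common prefix with $(b_n)$ tends to infinity). A sequence is $k$-automatic if it is the image under a $1$-uniform morphism of the iterative fixed point of a $k$-uniform morphism, and automatic if it is $k$-automatic for some $k\ge2$. A sequence is non-uniformly pure morphic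 if it is the iterative fixed point of a non-uniform morphism, and non-uniformly morphic if it is the image under a $1$-uniform morphism of a non-uniformly pure morphic sequence; here it is assumed that the alphabet of the non-uniform morphism coincides with the set of letters actually occurring in its fixed point. *)

theory Defs
  imports Main
begin

definition morph_ext :: "('a \<Rightarrow> 'a list) \<Rightarrow> 'a list \<Rightarrow> 'a list" where
  "morph_ext \<sigma> w = concat (map \<sigma> w)"

definition is_morphism_on :: "'a set \<Rightarrow> ('a \<Rightarrow> 'a list) \<Rightarrow> bool" where
  "is_morphism_on C \<sigma> \<longleftrightarrow> (\<forall>c\<in>C. set (\<sigma> c) \<subseteq> C)"

definition uniform_on :: "nat \<Rightarrow> 'a set \<Rightarrow> ('a \<Rightarrow> 'a list) \<Rightarrow> bool" where
  "uniform_on k C \<sigma> \<longleftrightarrow> (\<forall>c\<in>C. length (\<sigma> c) = k)"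

definition nonuniform_on :: "'a set \<Rightarrow> ('a \<Rightarrow> 'a list) \<Rightarrow> bool" where
  "nonuniform_on C \<sigma> \<longleftrightarrow> \<not> (\<exists>k. uniform_on k C \<sigma>)"

definition words_converge_to :: "(nat \<Rightarrow> 'a list) \<Rightarrow> (nat \<Rightarrow> 'a) \<Rightarrow> bool" where
  "words_converge_to w b \<longleftrightarrow>
     (\<forall>N. \<exists>L. \<forall>l\<ge>L. N \<le> length (w l) \<and> (\<forall>i<N. w l ! i = b i))"

definition iter_fixed_point :: "'a set \<Rightarrow> ('a \<Rightarrow> 'a list) \<Rightarrow> (nat \<Rightarrow> 'a) \<Rightarrow> bool" where
  "iter_fixed_point C \<sigma> b \<longleftrightarrow>
     is_morphism_on C \<sigma> \<and> (\<forall>n. b n \<in> C) \<and>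
     (\<exists>x. \<sigma> (b 0) = b 0 # x \<and> (\<forall>l. (morph_ext \<sigma> ^^ l) x \<noteq> [])) \<and>
     words_converge_to (\<lambda>l. (morph_ext \<sigma> ^^ l) [b 0]) b"

text \<open>k-automatic: image under a letter-to-letter map of the iterative fixed point of a
  k-uniform morphism over some finite alphabet (alphabets are encoded as finite sets of
  naturals, which is no loss of generality).\<close>
definition k_automatic :: "nat \<Rightarrow> (nat \<Rightarrow> 'b) \<Rightarrow> bool" where
  "k_automatic k a \<longleftrightarrow>
     (\<exists>(C::nat set) \<sigma> b (\<tau>::nat \<Rightarrow> 'b). finite C \<and> uniform_on k C \<sigma> \<and>
        iter_fixed_point C \<sigma> b \<and> (\<forall>n. a n = \<tau> (b n)))"

definition automatic :: "(nat \<Rightarrow> 'b) \<Rightarrow> bool" where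
  "automatic a \<longleftrightarrow> (\<exists>k\<ge>2. k_automatic k a)"

definition nonuniformly_morphic :: "(nat \<Rightarrow> 'b) \<Rightarrow> bool" where
  "nonuniformly_morphic a \<longleftrightarrow>
     (\<exists>(C::nat set) \<sigma> b (\<tau>::nat \<Rightarrow> 'b). finite C \<and> C = range b \<and> nonuniform_on C \<sigma> \<and>
        iter_fixed_point C \<sigma> b \<and> (\<forall>n. a n = \<tau> (b n)))"

end

theory Submission
  imports Defs "HOL-Library.Sublist"
begin

text \<open>If b is the iterative fixed point of a k-uniform morphism \<sigma>, then \<sigma>(b n) is the block
  b[kn, kn + k) of b. Recode b by replacing its first p + 1 letters by fresh, pairwise distinct
  letters, and send the fresh letter at position n \<le> p to the block of the recoded sequence cut at
  kn + 1 instead of kn (for 1 \<le> n \<le> p); the old letters keep their images. The recoded sequence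
  is again an iterative fixed point, now of a non-uniform morphism: the first fresh letter has an
  image of length k + 1, the last one of length k - 1. Forgetting the marks recovers b.
  The new alphabet has p + 1 + #{b n | n > p} letters. As p grows by one this number grows by at
  most one; it is at most 2 + #A for p = 1 and eventually exceeds it, so some p hits 2 + #A.\<close>

lemma morph_ext_Nil [simp]: "morph_ext \<sigma> [] = []"
  and morph_ext_Cons [simp]: "morph_ext \<sigma> (c # w) = \<sigma> c @ morph_ext \<sigma> w"
  and morph_ext_append [simp]: "morph_ext \<sigma> (u @ v) = morph_ext \<sigma> u @ morph_ext \<sigma> v"
  by (simp_all add: morph_ext_def)

lemma morph_ext_prefix: "prefix u v \<Longrightarrow> prefix (morph_ext \<sigma> u) (morph_ext \<sigma> v)"
  by (auto simp: prefix_def)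

lemma length_morph_ext_uniform:
  "uniform_on k C \<sigma> \<Longrightarrow> set w \<subseteq> C \<Longrightarrow> length (morph_ext \<sigma> w) = k * length w"
  by (induction w) (auto simp: uniform_on_def)

lemma length_morph_ext_ge:
  "(\<forall>c\<in>set w. \<sigma> c \<noteq> []) \<Longrightarrow> length w \<le> length (morph_ext \<sigma> w)"
proof (induction w)
  case (Cons c w)
  then have "1 \<le> length (\<sigma> c)" by (simp add: Suc_le_eq)
  with Cons show ?case by simp
qed simp

lemma set_morph_ext_subset:
  "is_morphism_on C \<sigma> \<Longrightarrow> set w \<subseteq> C \<Longrightarrow> set (morph_ext \<sigma> w) \<subseteq> C"
  by (induction w) (auto simp: is_morphism_on_def)

lemma set_morph_ext_pow_subset:
  "is_morphism_on C \<sigma> \<Longrightarrow> set w \<subseteq> C \<Longrightarrow> set ((morph_ext \<sigma> ^^ l) w) \<subseteq> C"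
  by (induction l) (auto dest: set_morph_ext_subset)

lemma length_morph_ext_pow_ge:
  assumes "is_morphism_on D \<sigma>" and "\<forall>c\<in>D. \<sigma> c \<noteq> []" and "set w \<subseteq> D"
  shows "length w \<le> length ((morph_ext \<sigma> ^^ l) w)"
proof (induction l)
  case (Suc l)
  have "set ((morph_ext \<sigma> ^^ l) w) \<subseteq> D"
    using set_morph_ext_pow_subset[OF assms(1,3)] .
  then have "\<forall>c\<in>set ((morph_ext \<sigma> ^^ l) w). \<sigma> c \<noteq> []"
    using assms(2) by blast
  then have "length ((morph_ext \<sigma> ^^ l) w) \<le> length (morph_ext \<sigma> ((morph_ext \<sigma> ^^ l) w))"
    by (rule length_morph_ext_ge)
  with Suc show ?case by simp
qed simp

lemma prefix_map_upt:
  assumes "prefix u (map b [0..<m])"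
  shows "u = map b [0..<length u]"
proof -
  have "u = take (length u) (map b [0..<m])" and "length u \<le> m"
    using assms prefix_length_le[OF assms] by (auto simp: prefix_def)
  then show ?thesis by (simp add: take_map)
qed

lemma iter_fixed_point_iterate_prefix:
  assumes F: "iter_fixed_point C \<sigma> b"
  shows "(morph_ext \<sigma> ^^ l) [b 0] = map b [0..<length ((morph_ext \<sigma> ^^ l) [b 0])]"
proof -
  define W where "W l = (morph_ext \<sigma> ^^ l) [b 0]" for l
  obtain x where x: "\<sigma> (b 0) = b 0 # x"
    using F by (auto simp: iter_fixed_point_def)
  have conv: "words_converge_to W b"
    using F by (simp add: iter_fixed_point_def W_def[abs_def])
  have prefix_Suc: "prefix (W l) (W (Suc l))" for l
  proof (induction l)
    case 0
    show ?case using x by (simp add: W_def)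
  next
    case (Suc l)
    then show ?case unfolding W_def by (simp add: morph_ext_prefix)
  qed
  have mono: "prefix (W l) (W m)" if "l \<le> m" for l m
    using that
  proof (induction m rule: dec_induct)
    case (step m)
    from step.IH prefix_Suc[of m] show ?case by (rule prefix_order.trans)
  qed simp
  have "W l ! i = b i" if i: "i < length (W l)" for i
  proof -
    obtain L where L: "\<forall>l'\<ge>L. \<forall>i<length (W l). W l' ! i = b i"
      using conv[unfolded words_converge_to_def, rule_format, of "length (W l)"] by blast
    obtain r where "W (max L l) = W l @ r"
      using mono[of l "max L l"] by (auto simp: prefix_def)
    then have "W l ! i = W (max L l) ! i" using i by (simp add: nth_append)
    then show ?thesis using L i by simp
  qed
  then show ?thesis unfolding W_def[symmetric] by (intro nth_equalityI) auto
qed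

lemma iter_fixed_point_morph_ext_prefix:
  assumes F: "iter_fixed_point C \<sigma> b"
  shows "morph_ext \<sigma> (map b [0..<n]) = map b [0..<length (morph_ext \<sigma> (map b [0..<n]))]"
proof -
  define W where "W l = (morph_ext \<sigma> ^^ l) [b 0]" for l
  obtain l where l: "n \<le> length (W l)"
    using F unfolding iter_fixed_point_def words_converge_to_def W_def by blast
  have W: "W m = map b [0..<length (W m)]" for m
    unfolding W_def by (rule iter_fixed_point_iterate_prefix[OF F])
  have "prefix (map b [0..<n]) (W l)"
    using l W[of l] by (metis take_is_prefix take_map take_upt add_0)
  then have "prefix (morph_ext \<sigma> (map b [0..<n])) (W (Suc l))"
    unfolding W_def by (simp add: morph_ext_prefix)
  then show ?thesis using W[of "Suc l"] by (metis prefix_map_upt)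
qed

lemma iter_fixed_point_letter_image:
  assumes "iter_fixed_point C \<sigma> b"
  defines "L n \<equiv> length (morph_ext \<sigma> (map b [0..<n]))"
  shows "\<sigma> (b n) = map b [L n..<L (Suc n)]"
proof -
  have L_Suc: "L (Suc n) = L n + length (\<sigma> (b n))"
    by (simp add: L_def)
  have "map b [0..<L n] @ \<sigma> (b n) = map b [0..<L (Suc n)]"
    using iter_fixed_point_morph_ext_prefix[OF assms(1), of n]
      iter_fixed_point_morph_ext_prefix[OF assms(1), of "Suc n"] by (simp add: L_def)
  also have "\<dots> = map b [0..<L n] @ map b [L n..<L (Suc n)]"
    using upt_add_eq_append[of 0 "L n" "length (\<sigma> (b n))"] L_Suc by simp
  finally show ?thesis by simp
qed

lemma uniform_fixed_point_letter_image:
  assumes "uniform_on k C \<sigma>" and "iter_fixed_point C \<sigma> b"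
  shows "\<sigma> (b n) = map b [k * n..<k * n + k]"
proof -
  have "b m \<in> C" for m
    using assms(2) by (auto simp: iter_fixed_point_def)
  then have L: "length (morph_ext \<sigma> (map b [0..<m])) = k * m" for m
    using length_morph_ext_uniform[OF assms(1), of "map b [0..<m]"] by auto
  show ?thesis
    using iter_fixed_point_letter_image[OF assms(2), of n] unfolding L by (simp add: add.commute)
qed

lemma uniform_fixed_point_length_ge_2:
  assumes "uniform_on k C \<sigma>" and "iter_fixed_point C \<sigma> b"
  shows "2 \<le> k"
proof -
  obtain x where x: "\<sigma> (b 0) = b 0 # x" and "(morph_ext \<sigma> ^^ 0) x \<noteq> []"
    using assms(2) unfolding iter_fixed_point_def by blast
  then have "2 \<le> length (\<sigma> (b 0))" by (cases x) auto
  moreover have "length (\<sigma> (b 0)) = k"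
    using assms unfolding uniform_on_def iter_fixed_point_def by blast
  ultimately show ?thesis by simp
qed

lemma morph_ext_blocks_prefix:
  assumes "S 0 = 0" and "\<And>n. S n \<le> S (Suc n)"
    and blocks: "\<And>n. \<phi> (b n) = map b [S n..<S (Suc n)]"
  shows "morph_ext \<phi> (map b [0..<n]) = map b [0..<S n]"
proof (induction n)
  case (Suc n)
  have "[0..<S (Suc n)] = [0..<S n] @ [S n..<S (Suc n)]"
    using upt_add_eq_append[of 0 "S n" "S (Suc n) - S n"] assms(2)[of n] by simp
  with Suc show ?case by (simp add: blocks)
qed (simp add: assms(1))

lemma strict_mono_funpow_gt:
  fixes S :: "nat \<Rightarrow> nat"
  assumes "strict_mono S" and "1 < S 1"
  shows "l < (S ^^ l) 1"
proof -
  have S_gt: "m < S m" if "1 \<le> m" for m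
    using that
  proof (induction m rule: dec_induct)
    case (step m)
    then show ?case using assms(1) by (simp add: strict_mono_Suc_iff less_trans_Suc)
  qed (use assms(2) in simp)
  show ?thesis
  proof (induction l)
    case (Suc l)
    then show ?case using S_gt[of "(S ^^ l) 1"] by simp
  qed simp
qed

lemma iter_fixed_point_of_blocks:
  assumes S: "strict_mono S" "S 0 = 0" "1 < S 1"
    and blocks: "\<And>n. \<phi> (b n) = map b [S n..<S (Suc n)]"
  shows "iter_fixed_point (range b) \<phi> b"
proof -
  have S_Suc: "S n < S (Suc n)" for n
    using S(1) by (simp add: strict_mono_Suc_iff)
  have morphism: "is_morphism_on (range b) \<phi>"
    by (auto simp: is_morphism_on_def blocks)
  have nonempty: "\<forall>c\<in>range b. \<phi> c \<noteq> []"
  proof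
    fix c assume "c \<in> range b"
    then obtain n where "c = b n" by blast
    then show "\<phi> c \<noteq> []" using S_Suc[of n] by (simp add: blocks)
  qed
  have prefix: "morph_ext \<phi> (map b [0..<n]) = map b [0..<S n]" for n
    using morph_ext_blocks_prefix[OF S(2) less_imp_le[OF S_Suc] blocks] .
  define x where "x = map b [1..<S 1]"
  have x: "\<phi> (b 0) = b 0 # x"
    using S by (simp add: blocks x_def upt_conv_Cons)
  have "x \<noteq> []" and "set x \<subseteq> range b"
    using S(3) by (auto simp: x_def)
  then have "(morph_ext \<phi> ^^ l) x \<noteq> []" for l
    using length_morph_ext_pow_ge[OF morphism nonempty, of x l] by auto
  moreover have "words_converge_to (\<lambda>l. (morph_ext \<phi> ^^ l) [b 0]) b"
    unfolding words_converge_to_def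
  proof (intro allI exI impI)
    fix N l :: nat assume "N \<le> l"
    then have "N < (S ^^ l) 1"
      using strict_mono_funpow_gt[OF S(1,3)] le_less_trans by blast
    moreover have "(morph_ext \<phi> ^^ l) [b 0] = map b [0..<(S ^^ l) 1]"
      by (induction l) (simp_all flip: prefix)
    ultimately show "N \<le> length ((morph_ext \<phi> ^^ l) [b 0]) \<and>
      (\<forall>i<N. (morph_ext \<phi> ^^ l) [b 0] ! i = b i)"
      by auto
  qed
  ultimately show ?thesis
    unfolding iter_fixed_point_def using morphism x by blast
qed

definition marked_prefix :: "nat \<Rightarrow> nat \<Rightarrow> ('c \<Rightarrow> nat) \<Rightarrow> (nat \<Rightarrow> 'c) \<Rightarrow> nat \<Rightarrow> nat" where
  "marked_prefix M p e b n = (if n \<le> p then M + n else e (b n))"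

definition marked_cut :: "nat \<Rightarrow> nat \<Rightarrow> nat \<Rightarrow> nat" where
  "marked_cut k p n = (if n = 0 then 0 else if n \<le> p then k * n + 1 else k * n)"

lemma strict_mono_marked_cut: "2 \<le> k \<Longrightarrow> strict_mono (marked_cut k p)"
  by (auto simp: strict_mono_Suc_iff marked_cut_def algebra_simps)

lemma marked_prefix_blocks:
  fixes p :: nat
  assumes inj: "inj_on e C" and bound: "\<forall>c\<in>C. e c < M"
    and U: "uniform_on k C \<sigma>" and F: "iter_fixed_point C \<sigma> b"
  defines "b' \<equiv> marked_prefix M p e b" and "S \<equiv> marked_cut k p"
  shows "\<exists>\<phi>. \<forall>n. \<phi> (b' n) = map b' [S n..<S (Suc n)]"
proof -
  define \<phi> where "\<phi> c = (if M \<le> c \<and> c \<le> M + p then map b' [S (c - M)..<S (Suc (c - M))]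
    else map e (\<sigma> (inv_into C e c)))" for c
  have "\<phi> (b' n) = map b' [S n..<S (Suc n)]" for n
  proof (cases "n \<le> p")
    case True
    then show ?thesis by (simp add: \<phi>_def b'_def marked_prefix_def)
  next
    case False
    have b_in: "b i \<in> C" for i
      using F by (simp add: iter_fixed_point_def)
    have k2: "2 \<le> k"
      using uniform_fixed_point_length_ge_2[OF U F] .
    have "e (b n) < M"
      using bound b_in by blast
    then have "\<phi> (b' n) = map e (\<sigma> (b n))"
      using False inj b_in[of n] by (simp add: \<phi>_def b'_def marked_prefix_def)
    also have "\<dots> = map (e \<circ> b) [k * n..<k * n + k]"
      by (simp add: uniform_fixed_point_letter_image[OF U F])
    also have "\<dots> = map b' [k * n..<k * n + k]"
    proof (rule map_cong[OF refl])
      fix i assume "i \<in> set [k * n..<k * n + k]"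
      moreover have "n \<le> k * n" using k2 by simp
      ultimately have "p < i" using False by (simp, linarith)
      then show "(e \<circ> b) i = b' i" by (simp add: b'_def marked_prefix_def)
    qed
    finally show ?thesis using False by (simp add: S_def marked_cut_def algebra_simps)
  qed
  then show ?thesis by blast
qed

lemma marked_prefix_iter_fixed_point:
  assumes "inj_on e C" and "\<forall>c\<in>C. e c < M"
    and U: "uniform_on k C \<sigma>" and F: "iter_fixed_point C \<sigma> b" and "1 \<le> p"
  defines "b' \<equiv> marked_prefix M p e b"
  shows "\<exists>\<phi>. nonuniform_on (range b') \<phi> \<and> iter_fixed_point (range b') \<phi> b'"
proof -
  let ?S = "marked_cut k p"
  obtain \<phi> where blocks: "\<And>n. \<phi> (b' n) = map b' [?S n..<?S (Suc n)]"
    using marked_prefix_blocks[OF assms(1-4), of p] unfolding b'_def by blast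
  have k2: "2 \<le> k"
    using uniform_fixed_point_length_ge_2[OF U F] .
  have "?S 0 = 0" and "1 < ?S 1"
    using k2 by (simp_all add: marked_cut_def)
  then have "iter_fixed_point (range b') \<phi> b'"
    using iter_fixed_point_of_blocks[OF strict_mono_marked_cut[OF k2]] blocks by blast
  moreover have "nonuniform_on (range b') \<phi>"
  proof -
    have "length (\<phi> (b' 0)) = k + 1" and "length (\<phi> (b' p)) = k - 1"
      using \<open>1 \<le> p\<close> by (simp_all add: blocks marked_cut_def algebra_simps)
    then have "length (\<phi> (b' 0)) \<noteq> length (\<phi> (b' p))"
      by simp
    then show ?thesis
      unfolding nonuniform_on_def uniform_on_def by (metis rangeI)
  qed
  ultimately show ?thesis by blast
qed

lemma range_marked_prefix:
  "range (marked_prefix M p e b) = (\<lambda>n. M + n) ` {..p} \<union> e ` b ` {p<..}"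
proof -
  have "range (marked_prefix M p e b) = marked_prefix M p e b ` ({..p} \<union> {p<..})"
    by (rule arg_cong[where f = "image _"]) auto
  also have "\<dots> = (\<lambda>n. M + n) ` {..p} \<union> (e \<circ> b) ` {p<..}"
    unfolding image_Un by (intro arg_cong2[where f = "(\<union>)"] image_cong) (auto simp: marked_prefix_def)
  finally show ?thesis by (simp add: image_comp)
qed

lemma card_range_marked_prefix:
  assumes "finite C" and "inj_on e C" and "\<forall>c\<in>C. e c < M" and "\<forall>n. b n \<in> C"
  shows "finite (range (marked_prefix M p e b))"
    and "card (range (marked_prefix M p e b)) = Suc p + card (b ` {p<..})"
proof -
  have tail: "b ` {p<..} \<subseteq> C"
    using assms(4) by auto
  then have finite_tail: "finite (e ` b ` {p<..})"
    using assms(1) finite_subset by blast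
  then show "finite (range (marked_prefix M p e b))"
    by (simp add: range_marked_prefix)
  have "(\<lambda>n. M + n) ` {..p} \<inter> e ` b ` {p<..} = {}"
    using assms(3) tail by fastforce
  moreover have "card (e ` b ` {p<..}) = card (b ` {p<..})"
    using card_image inj_on_subset[OF assms(2) tail] by blast
  ultimately show "card (range (marked_prefix M p e b)) = Suc p + card (b ` {p<..})"
    unfolding range_marked_prefix using finite_tail by (simp add: card_Un_disjoint card_image)
qed

lemma marked_prefix_decode:
  assumes "inj_on e C" and "\<forall>c\<in>C. e c < M" and "\<forall>n. b n \<in> C"
  shows "\<exists>\<tau>. \<forall>n. b n = \<tau> (marked_prefix M p e b n)"
proof -
  define \<tau> where "\<tau> c = (if M \<le> c then b (c - M) else inv_into C e c)" for c
  have "\<not> M \<le> e (b n)" for n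
    using assms(2,3) by (meson not_le)
  then have "b n = \<tau> (marked_prefix M p e b n)" for n
    using assms(1,3) by (simp add: \<tau>_def marked_prefix_def inv_into_f_f)
  then show ?thesis by blast
qed

lemma uniform_fixed_point_recoding:
  fixes b :: "nat \<Rightarrow> 'c"
  assumes "finite C" and U: "uniform_on k C \<sigma>" and F: "iter_fixed_point C \<sigma> b" and "1 \<le> p"
  shows "\<exists>(b' :: nat \<Rightarrow> nat) \<phi> \<tau>. finite (range b') \<and> card (range b') = Suc p + card (b ` {p<..}) \<and>
    nonuniform_on (range b') \<phi> \<and> iter_fixed_point (range b') \<phi> b' \<and> (\<forall>n. b n = \<tau> (b' n))"
proof -
  obtain e :: "'c \<Rightarrow> nat" and M where e: "inj_on e C" "e ` C = {..<M}"
    using finite_imp_inj_to_nat_seg[OF assms(1)] by (metis lessThan_def)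
  then have bound: "\<forall>c\<in>C. e c < M" by auto
  have b_in: "\<forall>n. b n \<in> C"
    using F by (simp add: iter_fixed_point_def)
  show ?thesis
    using marked_prefix_iter_fixed_point[OF e(1) bound U F \<open>1 \<le> p\<close>]
      card_range_marked_prefix[OF assms(1) e(1) bound b_in]
      marked_prefix_decode[OF e(1) bound b_in] by blast
qed

lemma nat_unit_steps_intermediate_value:
  fixes f :: "nat \<Rightarrow> nat"
  assumes steps: "\<And>n. f (Suc n) \<le> Suc (f n)" and "m \<le> m'" and "f m \<le> t" and "t \<le> f m'"
  shows "\<exists>p. m \<le> p \<and> p \<le> m' \<and> f p = t"
  using assms(2,4)
proof (induction m' rule: dec_induct)
  case base
  then show ?case using assms(3) by auto
next
  case (step n)
  show ?case
  proof (cases "t \<le> f n")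
    case True
    then show ?thesis using step.IH by (auto intro: le_SucI)
  next
    case False
    then show ?thesis using step.hyps step.prems steps[of n] by (intro exI[of _ "Suc n"]) auto
  qed
qed

lemma ex_card_tail_image_eq:
  fixes a :: "nat \<Rightarrow> 'a"
  assumes "finite A" and "\<forall>n. a n \<in> A"
  shows "\<exists>p\<ge>1. p + card (a ` {p<..}) = 1 + card A"
proof -
  define f where "f p = p + card (a ` {p<..})" for p
  have tail: "a ` {p<..} \<subseteq> A" for p
    using assms(2) by auto
  have "f (Suc n) \<le> Suc (f n)" for n
  proof -
    have "a ` {Suc n<..} \<subseteq> a ` {n<..}" by auto
    then have "card (a ` {Suc n<..}) \<le> card (a ` {n<..})"
      using card_mono assms(1) finite_subset tail by metis
    then show ?thesis by (simp add: f_def)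
  qed
  moreover have "f 1 \<le> 1 + card A"
    using card_mono[OF assms(1) tail] by (simp add: f_def)
  moreover have "1 + card A \<le> f (1 + card A)"
    by (simp add: f_def)
  ultimately obtain p where "1 \<le> p" "f p = 1 + card A"
    using nat_unit_steps_intermediate_value[of f 1 "1 + card A" "1 + card A"] by auto
  then show ?thesis unfolding f_def by blast
qed

theorem mainTheorem2:
  fixes a :: "nat \<Rightarrow> 'a" and A :: "'a set"
  assumes "finite A" and "\<forall>n. a n \<in> A" and "automatic a"
  shows "nonuniformly_morphic a \<and>
    ((\<exists>k \<sigma>. uniform_on k A \<sigma> \<and> iter_fixed_point A \<sigma> a) \<longrightarrow>
      (\<exists>(B::nat set) (a'::nat \<Rightarrow> nat) \<phi> (\<tau>::nat \<Rightarrow> 'a).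
         card B = 2 + card A \<and> B = range a' \<and> nonuniform_on B \<phi> \<and>
         iter_fixed_point B \<phi> a' \<and> (\<forall>n. a n = \<tau> (a' n))))"
proof (intro conjI impI)
  obtain k C \<sigma> b and \<tau> :: "nat \<Rightarrow> 'a" where C: "finite C" "uniform_on k C \<sigma>"
    "iter_fixed_point C \<sigma> b" and a: "\<forall>n. a n = \<tau> (b n)"
    using assms(3) unfolding automatic_def k_automatic_def by blast
  obtain b' :: "nat \<Rightarrow> nat" and \<phi> \<tau>' where "finite (range b')" "nonuniform_on (range b') \<phi>"
    "iter_fixed_point (range b') \<phi> b'" and b: "\<forall>n. b n = \<tau>' (b' n)"
    using uniform_fixed_point_recoding[OF C le_refl] by blast
  moreover have "\<forall>n. a n = (\<tau> \<circ> \<tau>') (b' n)"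
    using a b by simp
  ultimately show "nonuniformly_morphic a"
    unfolding nonuniformly_morphic_def by blast
next
  assume "\<exists>k \<sigma>. uniform_on k A \<sigma> \<and> iter_fixed_point A \<sigma> a"
  then obtain k \<sigma> where "uniform_on k A \<sigma>" "iter_fixed_point A \<sigma> a" by blast
  moreover obtain p where "1 \<le> p" "p + card (a ` {p<..}) = 1 + card A"
    using ex_card_tail_image_eq[OF assms(1,2)] by blast
  ultimately show "\<exists>(B::nat set) (a'::nat \<Rightarrow> nat) \<phi> (\<tau>::nat \<Rightarrow> 'a).
      card B = 2 + card A \<and> B = range a' \<and> nonuniform_on B \<phi> \<and>
      iter_fixed_point B \<phi> a' \<and> (\<forall>n. a n = \<tau> (a' n))"
    using uniform_fixed_point_recoding[OF assms(1)] by fastforce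
qed

end
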